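(* Let $r>0$, let $k\in\{2,\dots,n\}$, and let $\mathbf{c}=(c_1,\dots,c_{k-1},c_k,0,\dots,0)\in\mathbb{R}^n_{\ge0}$ and $\mathbf{c}'=(c_1,\dots,c_{k-1},0,0,\dots,0)$ (i.e. $\mathbf{c}'$ is obtained from $\mathbf{c}$ by replacing its $k$-th component by $0$). Then $$\mathrm{Vol}\big(C(\mathbf{0},1)\cap C(\mathbf{c},r)\big)\le \mathrm{Vol}\big(C(\mathbf{0},1)\cap C(\mathbf{c}',r)\big).$$
   Context: For $\mathbf{c}\in\mathbb{R}^n$, $r\ge 0$, $C(\mathbf{c},r)=\{\mathbf{x}\in\mathbb{R}^n:\|\mathbf{x}-\mathbf{c}\|_1\le r\}$. *)

theory Defs
  imports "HOL-Analysis.Analysis"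
begin

text \<open>Points of R^n are represented as extensional functions on the index set {1..n};
  Lebesgue measure on R^n is the n-fold product of Lebesgue-Borel measure.\<close>

definition lebesgue_n :: "nat \<Rightarrow> (nat \<Rightarrow> real) measure" where
  "lebesgue_n n = Pi\<^sub>M {1..n} (\<lambda>_. lborel)"

definition l1_ball :: "nat \<Rightarrow> (nat \<Rightarrow> real) \<Rightarrow> real \<Rightarrow> (nat \<Rightarrow> real) set" where
  "l1_ball n c r = {x \<in> PiE {1..n} (\<lambda>_. UNIV). (\<Sum>i\<in>{1..n}. \<bar>x i - c i\<bar>) \<le> r}"

end

theory Submission
  imports Defs
begin

text \<open>Fix all coordinates but the k-th. The slice of an l1-ball C(c,r) is then a closed interval
  centred at c k, and the slice of C(0,\<rho>) an interval centred at 0 (with radii depending on the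
  fixed coordinates only). In dimension one, moving the centre of the second interval to the
  centre of the first can only enlarge their intersection, so by Fubini replacing c k by 0 can
  only enlarge the volume of C(0,\<rho>) \<inter> C(c,r).\<close>

lemma emeasure_interval_inter_le_centred:
  fixes a b d :: real
  shows "emeasure lborel {y. \<bar>y\<bar> \<le> a \<and> \<bar>y - d\<bar> \<le> b}
       \<le> emeasure lborel {y. \<bar>y\<bar> \<le> a \<and> \<bar>y\<bar> \<le> b}"
proof (cases "a \<ge> 0 \<and> b \<ge> 0")
  case False
  then have "{y::real. \<bar>y\<bar> \<le> a \<and> \<bar>y - d\<bar> \<le> b} = {}" by auto
  then show ?thesis by (simp only: emeasure_empty zero_le)
next
  case True
  let ?S = "{y::real. \<bar>y\<bar> \<le> a \<and> \<bar>y - d\<bar> \<le> b}"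
  have "?S \<subseteq> {-a..a}" "?S \<subseteq> {d-b..d+b}" by auto
  from this[THEN emeasure_mono, of lborel]
  have "emeasure lborel ?S \<le> ennreal (2*a)" "emeasure lborel ?S \<le> ennreal (2*b)"
    using True by simp_all
  then have "emeasure lborel ?S \<le> ennreal (2 * min a b)"
    by (cases "a \<le> b") (auto simp: min_def)
  also have "\<dots> = emeasure lborel {- min a b .. min a b}"
    using True by (subst emeasure_lborel_Icc) auto
  also have "{- min a b .. min a b} = {y::real. \<bar>y\<bar> \<le> a \<and> \<bar>y\<bar> \<le> b}"
    by auto
  finally show ?thesis .
qed

lemma fun_upd_mem_l1_ball_iff:
  assumes k: "k \<in> {1..n}" and x: "x \<in> PiE ({1..n} - {k}) (\<lambda>_. UNIV)"
  shows "x(k := y) \<in> l1_ball n c r \<longleftrightarrow> \<bar>y - c k\<bar> \<le> r - (\<Sum>i\<in>{1..n} - {k}. \<bar>x i - c i\<bar>)"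
proof -
  have "x(k := y) \<in> PiE {1..n} (\<lambda>_. UNIV)"
    using x k by (auto simp: PiE_iff extensional_def)
  moreover have "(\<Sum>i\<in>{1..n}. \<bar>(x(k := y)) i - c i\<bar>) = \<bar>y - c k\<bar> + (\<Sum>i\<in>{1..n} - {k}. \<bar>x i - c i\<bar>)"
    using k by (subst sum.remove[of _ k]) auto
  ultimately show ?thesis unfolding l1_ball_def by auto
qed

lemma sets_l1_ball: "l1_ball n c r \<in> sets (lebesgue_n n)"
proof -
  have "l1_ball n c r = {x \<in> space (lebesgue_n n). (\<Sum>i\<in>{1..n}. \<bar>x i - c i\<bar>) \<le> r}"
    unfolding l1_ball_def lebesgue_n_def by (simp add: space_PiM)
  also have "\<dots> \<in> sets (lebesgue_n n)" unfolding lebesgue_n_def by measurable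
  finally show ?thesis .
qed

lemma emeasure_lebesgue_n_split_coordinate:
  assumes k: "k \<in> {1..n}" and S: "S \<in> sets (lebesgue_n n)"
  shows "emeasure (lebesgue_n n) S =
    (\<integral>\<^sup>+ x. (\<integral>\<^sup>+ y. indicator S (x(k := y)) \<partial>lborel) \<partial>(Pi\<^sub>M ({1..n} - {k}) (\<lambda>_. lborel)))"
proof -
  interpret product_sigma_finite "\<lambda>_. lborel" by standard
  define I where "I = {1..n} - {k}"
  have ins: "{1..n} = insert k I" using k unfolding I_def by auto
  have S': "S \<in> sets (Pi\<^sub>M (insert k I) (\<lambda>_. lborel))"
    using S unfolding lebesgue_n_def ins .
  have "emeasure (lebesgue_n n) S = integral\<^sup>N (Pi\<^sub>M (insert k I) (\<lambda>_. lborel)) (indicator S)"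
    using S' unfolding lebesgue_n_def ins by simp
  also have "\<dots> = (\<integral>\<^sup>+ x. (\<integral>\<^sup>+ y. indicator S (x(k := y)) \<partial>lborel) \<partial>(Pi\<^sub>M I (\<lambda>_. lborel)))"
    by (rule product_nn_integral_insert) (use S' in \<open>simp_all add: I_def\<close>)
  finally show ?thesis unfolding I_def .
qed

lemma emeasure_l1_ball_inter_le_zero_coordinate:
  assumes k: "k \<in> {1..n}"
  shows "emeasure (lebesgue_n n) (l1_ball n (\<lambda>_. 0) \<rho> \<inter> l1_ball n c r)
       \<le> emeasure (lebesgue_n n) (l1_ball n (\<lambda>_. 0) \<rho> \<inter> l1_ball n (c(k := 0)) r)"
proof -
  have "l1_ball n (\<lambda>_. 0) \<rho> \<inter> l1_ball n d r \<in> sets (lebesgue_n n)" for d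
    using sets_l1_ball by blast
  note split = emeasure_lebesgue_n_split_coordinate[OF k this]
  show ?thesis
    unfolding split
  proof (rule nn_integral_mono)
    fix x :: "nat \<Rightarrow> real" assume "x \<in> space (Pi\<^sub>M ({1..n} - {k}) (\<lambda>_. lborel))"
    then have x: "x \<in> PiE ({1..n} - {k}) (\<lambda>_. UNIV)" by (simp add: space_PiM)
    define a where "a = \<rho> - (\<Sum>i\<in>{1..n} - {k}. \<bar>x i - 0\<bar>)"
    define b where "b = r - (\<Sum>i\<in>{1..n} - {k}. \<bar>x i - c i\<bar>)"
    have slice_c: "(\<lambda>y. indicator (l1_ball n (\<lambda>_. 0) \<rho> \<inter> l1_ball n c r) (x(k := y)))
        = indicator {y::real. \<bar>y\<bar> \<le> a \<and> \<bar>y - c k\<bar> \<le> b}"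
      using fun_upd_mem_l1_ball_iff[OF k x, of _ "\<lambda>_. 0" \<rho>] fun_upd_mem_l1_ball_iff[OF k x, of _ c r]
      by (auto simp: a_def b_def indicator_def fun_eq_iff)
    have "b = r - (\<Sum>i\<in>{1..n} - {k}. \<bar>x i - (c(k := 0)) i\<bar>)"
      unfolding b_def by (intro arg_cong[where f="\<lambda>s. r - s"] sum.cong) auto
    then have slice_c0: "(\<lambda>y. indicator (l1_ball n (\<lambda>_. 0) \<rho> \<inter> l1_ball n (c(k := 0)) r) (x(k := y)))
        = indicator {y::real. \<bar>y\<bar> \<le> a \<and> \<bar>y\<bar> \<le> b}"
      using fun_upd_mem_l1_ball_iff[OF k x, of _ "\<lambda>_. 0" \<rho>] fun_upd_mem_l1_ball_iff[OF k x, of _ "c(k := 0)" r]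
      by (auto simp: a_def indicator_def fun_eq_iff)
    have "{y::real. \<bar>y\<bar> \<le> a \<and> \<bar>y - c k\<bar> \<le> b} \<in> sets lborel" by measurable
    moreover have "{y::real. \<bar>y\<bar> \<le> a \<and> \<bar>y\<bar> \<le> b} \<in> sets lborel" by measurable
    ultimately
    show "(\<integral>\<^sup>+ y. indicator (l1_ball n (\<lambda>_. 0) \<rho> \<inter> l1_ball n c r) (x(k := y)) \<partial>lborel)
        \<le> (\<integral>\<^sup>+ y. indicator (l1_ball n (\<lambda>_. 0) \<rho> \<inter> l1_ball n (c(k := 0)) r) (x(k := y)) \<partial>lborel)"
      unfolding slice_c slice_c0 using emeasure_interval_inter_le_centred by simp
  qed
qed

theorem mainTheorem8:
  fixes n k :: nat and c :: "nat \<Rightarrow> real" and r :: real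
  assumes "r > 0" and "2 \<le> k" and "k \<le> n"
    and "\<forall>i\<in>{1..n}. c i \<ge> 0"
    and "\<forall>i\<in>{k<..n}. c i = 0"
  shows "emeasure (lebesgue_n n) (l1_ball n (\<lambda>_. 0) 1 \<inter> l1_ball n c r)
       \<le> emeasure (lebesgue_n n) (l1_ball n (\<lambda>_. 0) 1 \<inter> l1_ball n (c(k := 0)) r)"
  using assms(2,3) by (intro emeasure_l1_ball_inter_le_zero_coordinate) simp

end
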